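(* Let $G$ be a graph and let $S$ be a dual general position set of $G$. Then the central vertex of any induced subgraph of $G$ isomorphic to $K_{1,3}$ does not belong to $S$.
   Context: For $S\subseteq V(G)$, two vertices $u,v$ are $S$-positionable if every shortest $u,v$-path $P$ satisfies $V(P)\cap S\subseteq\{u,v\}$. $S$ is a general position set if every two vertices of $S$ are $S$-positionable, and $S$ is a dual general position set if it is a general position set and every two vertices $u,v\in V(G)\setminus S$ are $S$-positionable. *)

theory Defs
  imports Main
begin

definition simple_graph :: "'a set \<Rightarrow> ('a \<Rightarrow> 'a \<Rightarrow> bool) \<Rightarrow> bool" where
  "simple_graph V E \<longleftrightarrow> finite V \<and> (\<forall>u v. E u v \<longrightarrow> u \<in> V \<and> v \<in> V)
     \<and> (\<forall>u v. E u v \<longrightarrow> E v u) \<and> (\<forall>v. \<not> E v v)"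

definition is_path :: "'a set \<Rightarrow> ('a \<Rightarrow> 'a \<Rightarrow> bool) \<Rightarrow> 'a list \<Rightarrow> 'a \<Rightarrow> 'a \<Rightarrow> bool" where
  "is_path V E P u v \<longleftrightarrow> P \<noteq> [] \<and> hd P = u \<and> last P = v \<and> distinct P \<and> set P \<subseteq> V
     \<and> (\<forall>i. i + 1 < length P \<longrightarrow> E (P ! i) (P ! (i + 1)))"

definition shortest_path :: "'a set \<Rightarrow> ('a \<Rightarrow> 'a \<Rightarrow> bool) \<Rightarrow> 'a list \<Rightarrow> 'a \<Rightarrow> 'a \<Rightarrow> bool" where
  "shortest_path V E P u v \<longleftrightarrow> is_path V E P u v
     \<and> (\<forall>Q. is_path V E Q u v \<longrightarrow> length P \<le> length Q)"

definition S_positionable :: "'a set \<Rightarrow> ('a \<Rightarrow> 'a \<Rightarrow> bool) \<Rightarrow> 'a set \<Rightarrow> 'a \<Rightarrow> 'a \<Rightarrow> bool" where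
  "S_positionable V E S u v \<longleftrightarrow>
     (\<forall>P. shortest_path V E P u v \<longrightarrow> set P \<inter> S \<subseteq> {u, v})"

definition general_position_set :: "'a set \<Rightarrow> ('a \<Rightarrow> 'a \<Rightarrow> bool) \<Rightarrow> 'a set \<Rightarrow> bool" where
  "general_position_set V E S \<longleftrightarrow> S \<subseteq> V \<and>
     (\<forall>u\<in>S. \<forall>v\<in>S. u \<noteq> v \<longrightarrow> S_positionable V E S u v)"

definition dual_general_position_set :: "'a set \<Rightarrow> ('a \<Rightarrow> 'a \<Rightarrow> bool) \<Rightarrow> 'a set \<Rightarrow> bool" where
  "dual_general_position_set V E S \<longleftrightarrow> general_position_set V E S \<and>
     (\<forall>u\<in>V - S. \<forall>v\<in>V - S. u \<noteq> v \<longrightarrow> S_positionable V E S u v)"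

definition induced_claw :: "'a set \<Rightarrow> ('a \<Rightarrow> 'a \<Rightarrow> bool) \<Rightarrow> 'a \<Rightarrow> 'a \<Rightarrow> 'a \<Rightarrow> 'a \<Rightarrow> bool" where
  "induced_claw V E x a b c \<longleftrightarrow> x \<in> V \<and> a \<in> V \<and> b \<in> V \<and> c \<in> V
     \<and> distinct [x, a, b, c]
     \<and> E x a \<and> E x b \<and> E x c \<and> \<not> E a b \<and> \<not> E a c \<and> \<not> E b c"

end

theory Submission
  imports Defs
begin

text \<open>Among the three leaves of a claw two lie on the same side of \<open>S\<close>, so the dual
general position property makes them \<open>S\<close>-positionable. These leaves are nonadjacent with
the centre as a common neighbour, hence the leaf--centre--leaf path is a shortest path
between them, and the centre, being an inner vertex of it, cannot lie in \<open>S\<close>.\<close>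

lemma is_path_length_ge_3:
  assumes "is_path V E P u v" and "u \<noteq> v" and "\<not> E u v"
  shows "3 \<le> length P"
proof (rule ccontr)
  assume short: "\<not> 3 \<le> length P"
  have path: "P \<noteq> []" "hd P = u" "last P = v" "E (P ! 0) (P ! 1) \<or> length P < 2"
    using assms(1) unfolding is_path_def by auto
  with short consider w where "P = [w]" | w w' where "P = [w, w']"
    by (cases P rule: remdups_adj.cases) (auto simp: not_le)
  then show False
    using assms(2,3) path(2-4) by cases auto
qed

lemma shortest_path_through_common_neighbour:
  assumes "u \<in> V" "x \<in> V" "v \<in> V" and "distinct [u, x, v]"
    and "E u x" "E x v" and "\<not> E u v"
  shows "shortest_path V E [u, x, v] u v"
proof -
  have "E ([u, x, v] ! i) ([u, x, v] ! (i + 1))" if "i + 1 < 3" for i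
    using that assms(5,6) by (cases i) (auto simp: less_Suc_eq)
  then have "is_path V E [u, x, v] u v"
    using assms(1-4) unfolding is_path_def by simp
  moreover have "length [u, x, v] \<le> length Q" if "is_path V E Q u v" for Q
    using is_path_length_ge_3[OF that] assms(4,7) by simp
  ultimately show ?thesis
    unfolding shortest_path_def by blast
qed

lemma dual_general_position_set_S_positionable:
  assumes "dual_general_position_set V E S"
    and "u \<in> V" "v \<in> V" "u \<noteq> v" and "u \<in> S \<longleftrightarrow> v \<in> S"
  shows "S_positionable V E S u v"
  using assms unfolding dual_general_position_set_def general_position_set_def by blast

lemma S_positionable_inner_vertex_notin:
  assumes "S_positionable V E S u v" and "shortest_path V E P u v"
    and "x \<in> set P" "x \<noteq> u" "x \<noteq> v"
  shows "x \<notin> S"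
  using assms unfolding S_positionable_def by blast

lemma dual_general_position_set_common_neighbour_notin:
  assumes "dual_general_position_set V E S"
    and "u \<in> V" "x \<in> V" "v \<in> V" and "distinct [u, x, v]"
    and "E u x" "E x v" and "\<not> E u v" and "u \<in> S \<longleftrightarrow> v \<in> S"
  shows "x \<notin> S"
proof -
  have "S_positionable V E S u v"
    using dual_general_position_set_S_positionable[OF assms(1,2,4) _ assms(9)] assms(5) by simp
  then show ?thesis
    using S_positionable_inner_vertex_notin shortest_path_through_common_neighbour assms(2-8)
    by (metis distinct_length_2_or_more list.set_intros(1,2))
qed

theorem mainTheorem8:
  fixes V :: "'a set" and E :: "'a \<Rightarrow> 'a \<Rightarrow> bool" and S :: "'a set"
  assumes "simple_graph V E"
    and "dual_general_position_set V E S"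
    and "induced_claw V E x a b c"
  shows "x \<notin> S"
proof -
  have claw: "x \<in> V" "a \<in> V" "b \<in> V" "c \<in> V" "distinct [x, a, b, c]"
    "E x a" "E x b" "E x c" "\<not> E a b" "\<not> E a c" "\<not> E b c"
    using assms(3) unfolding induced_claw_def by simp_all
  moreover have "E a x" "E b x"
    using assms(1) claw(6,7) unfolding simple_graph_def by blast+
  moreover consider "a \<in> S \<longleftrightarrow> b \<in> S" | "a \<in> S \<longleftrightarrow> c \<in> S" | "b \<in> S \<longleftrightarrow> c \<in> S"
    by blast
  ultimately show ?thesis
    using dual_general_position_set_common_neighbour_notin[OF assms(2)]
    by cases (metis distinct.simps(2) distinct_length_2_or_more)+
qed

end
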